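(* In the Haechi protocol (described in the context), assume the beacon shard has fewer than one third Byzantine nodes. For any two OTXs $OTX^1$ and $OTX^2$ received by the beacon chain, contained in CrossLinks $CL_1$ and $CL_2$ respectively, if either (i) $CL_1.blockTS < CL_2.blockTS$, or (ii) $CL_1 = CL_2$ and $f_{idx}(OTX^1) < f_{idx}(OTX^2)$, then Haechi orders $OTX^1$ before $OTX^2$ in the ordering phase (even if the beacon chain's leader is malicious).
   Context: Setting (Haechi). A sharded blockchain has shards $S_1,\dots,S_m$; shard $S_i$ maintains a chain $SC_i$ of blocks, $SC_i^h$ being the block at height $h$. Each block carries a publicly verifiable block timestamp, strictly increasing in block height within each shard. A beacon shard $S_0$ maintains a beacon chain via a leader-based BFT consensus. Transactions calling order-sensitive contracts are called OTXs. When shard $S_i$ handles its block at height $h$, it puts the valid new OTXs of the block, in in-block order, into a list $L_{tx}$ and sends the beacon chain a certified CrossLink $CL=\langle blockTS, L_{tx}, i, h\rangle$. $f_{idx}(\cdot)$ returns the index of a transaction within its block/CrossLink. Ordering phase: the beacon chain keeps for each shard $i$ a sequence $shardCLs[i]$ of received CrossLinks of $S_i$ with consecutive heights (CrossLinks arriving with a height gap are buffered until the gap is filled); $shardLastTS[i]$ is the timestamp of the last CrossLink in $shardCLs[i]$. Once every $shardCLs[i]$ is nonempty, an ordering cycle selects all CrossLinks in $shardCLs$ with $blockTS\le\min_i shardLastTS[i]$ and orders their OTXs by smaller block timestamp first, then by smaller index within the same CrossLink; the proposed order is accepted only through the beacon shard's BFT consensus, whose honest nodes check these rules. *)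

theory Defs
  imports Complex_Main
begin

(* A block / CrossLink is identified by (i, h): shard i, height h
   (heights start at 0).  ts i h is the (certified) block timestamp of SC_i^h and
   cnt i h the number of valid new OTXs in L_tx of that block.
   An OTX is identified by (i, h, j): the j-th entry of L_tx of CrossLink (i, h),
   so f_idx (i, h, j) = j and its CrossLink's blockTS is ts i h. *)

type_synonym cl = "nat \<times> nat"
type_synonym otx = "nat \<times> nat \<times> nat"

definition cl_of :: "otx \<Rightarrow> cl" where
  "cl_of x = (fst x, fst (snd x))"

definition f_idx :: "otx \<Rightarrow> nat" where
  "f_idx x = snd (snd x)"

definition blockTS :: "(nat \<Rightarrow> nat \<Rightarrow> real) \<Rightarrow> cl \<Rightarrow> real" where
  "blockTS ts c = ts (fst c) (snd c)"

definition otxs_of :: "(nat \<Rightarrow> nat \<Rightarrow> nat) \<Rightarrow> cl \<Rightarrow> otx set" where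
  "otxs_of cnt c = {(fst c, snd c, j) | j. j < cnt (fst c) (snd c)}"

(* shardCLs[i]: heights of received CrossLinks of shard i that are not yet ordered
   and lie in the consecutive-height run received so far (from height 0);
   R = set of received CrossLinks, P = CrossLinks already ordered. *)
definition shardCLs :: "cl set \<Rightarrow> cl set \<Rightarrow> nat \<Rightarrow> nat set" where
  "shardCLs R P i = {h. (\<forall>h'\<le>h. (i, h') \<in> R) \<and> (i, h) \<notin> P}"

definition shardLastTS :: "(nat \<Rightarrow> nat \<Rightarrow> real) \<Rightarrow> cl set \<Rightarrow> cl set \<Rightarrow> nat \<Rightarrow> real" where
  "shardLastTS ts R P i = ts i (Max (shardCLs R P i))"

definition order_ok :: "(nat \<Rightarrow> nat \<Rightarrow> real) \<Rightarrow> otx \<Rightarrow> otx \<Rightarrow> bool" where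
  "order_ok ts a b \<longleftrightarrow>
     blockTS ts (cl_of a) < blockTS ts (cl_of b) \<or>
     (blockTS ts (cl_of a) = blockTS ts (cl_of b) \<and>
        (cl_of a = cl_of b \<longrightarrow> f_idx a < f_idx b))"

(* The check an honest beacon node performs on a proposal (S, L) for an ordering
   cycle: S is the set of selected CrossLinks, L the proposed order of their OTXs. *)
definition valid_cycle ::
  "nat \<Rightarrow> (nat \<Rightarrow> nat \<Rightarrow> real) \<Rightarrow> (nat \<Rightarrow> nat \<Rightarrow> nat) \<Rightarrow> cl set \<Rightarrow> cl set
     \<Rightarrow> cl set \<times> otx list \<Rightarrow> bool" where
  "valid_cycle m ts cnt R P props \<longleftrightarrow>
     (\<forall>i\<in>{1..m}. shardCLs R P i \<noteq> {}) \<and>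
     fst props = {(i, h). i \<in> {1..m} \<and> h \<in> shardCLs R P i \<and>
                         ts i h \<le> (MIN i'\<in>{1..m}. shardLastTS ts R P i')} \<and>
     set (snd props) = (\<Union>c\<in>fst props. otxs_of cnt c) \<and>
     distinct (snd props) \<and>
     sorted_wrt (order_ok ts) (snd props)"

definition ordered_before :: "(nat \<Rightarrow> cl set \<times> otx list) \<Rightarrow> nat \<Rightarrow> cl set" where
  "ordered_before props k = (\<Union>k'<k. fst (props k'))"

definition output_log :: "(nat \<Rightarrow> cl set \<times> otx list) \<Rightarrow> nat \<Rightarrow> otx list" where
  "output_log props K = concat (map (\<lambda>k. snd (props k)) [0..<K])"

end

theory Submission imports Defs begin

(* Since 3|byz| < |nodes| < (3/2)|votes|, every accepted quorum contains an honest
   node, so every ordering cycle passes the check valid_cycle.  Within a cycle the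
   proposed list is sorted by order_ok, which puts OTX^1 before OTX^2.  Across
   cycles, let CL_2 be selected in cycle k.  Then blockTS CL_1 <= blockTS CL_2 is
   at most the cutoff min_i shardLastTS[i], hence at most the timestamp of the last
   CrossLink of CL_1's shard in shardCLs; as timestamps increase with height, CL_1
   is among that shard's consecutively received CrossLinks, so it is either already
   ordered or selected in cycle k as well.  No CrossLink is selected twice, so the
   concatenated output keeps OTX^1 before OTX^2.  The argument never uses that the
   received sets grow: shardCLs itself demands that all lower heights be received. *)

definition precedes :: "'a list \<Rightarrow> 'a \<Rightarrow> 'a \<Rightarrow> bool" where
  "precedes xs a b \<longleftrightarrow>
     (\<forall>p q. p < length xs \<and> q < length xs \<and> xs ! p = a \<and> xs ! q = b \<longrightarrow> p < q)"

lemma sorted_wrt_precedes: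
  assumes "sorted_wrt R xs" "\<not> R b a" "a \<noteq> b"
  shows "precedes xs a b"
  unfolding precedes_def
proof (intro allI impI)
  fix p q assume pq: "p < length xs \<and> q < length xs \<and> xs ! p = a \<and> xs ! q = b"
  show "p < q"
  proof (rule ccontr)
    assume "\<not> p < q"
    with pq \<open>a \<noteq> b\<close> have "q < p" by (metis linorder_neqE_nat)
    with pq assms(1) have "R b a" by (metis sorted_wrt_nth_less)
    with assms(2) show False ..
  qed
qed

lemma precedes_append:
  assumes "precedes xs a b" "precedes ys a b" "b \<in> set xs \<Longrightarrow> a \<notin> set ys"
  shows "precedes (xs @ ys) a b"
  unfolding precedes_def
proof (intro allI impI)
  fix p q assume pq: "p < length (xs @ ys) \<and> q < length (xs @ ys) \<and>
                      (xs @ ys) ! p = a \<and> (xs @ ys) ! q = b"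
  consider "p < length xs" "q < length xs" | "p \<ge> length xs" "q \<ge> length xs"
    | "p < length xs" "q \<ge> length xs" | "p \<ge> length xs" "q < length xs"
    by linarith
  then show "p < q"
  proof cases
    case 1
    with pq assms(1) show ?thesis by (simp add: precedes_def nth_append)
  next
    case 2
    with pq have "ys ! (p - length xs) = a" "ys ! (q - length xs) = b"
      "p - length xs < length ys" "q - length xs < length ys"
      by (auto simp: nth_append)
    with assms(2) have "p - length xs < q - length xs"
      by (simp add: precedes_def)
    with 2 show ?thesis by simp
  next
    case 3
    then show ?thesis by simp
  next
    case 4
    with pq have "xs ! q = b" "ys ! (p - length xs) = a" "p - length xs < length ys"
      by (auto simp: nth_append)
    with 4 have "b \<in> set xs" "a \<in> set ys"
      by (metis nth_mem)+
    with assms(3) show ?thesis by blast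
  qed
qed

lemma precedes_concat:
  assumes "\<And>xs. xs \<in> set xss \<Longrightarrow> precedes xs a b"
    and "\<And>i j. i < length xss \<Longrightarrow> j < length xss \<Longrightarrow>
               a \<in> set (xss ! i) \<Longrightarrow> b \<in> set (xss ! j) \<Longrightarrow> i \<le> j"
  shows "precedes (concat xss) a b"
  using assms
proof (induction xss)
  case Nil
  then show ?case by (simp add: precedes_def)
next
  case (Cons xs xss)
  have "precedes (concat xss) a b"
  proof (rule Cons.IH)
    show "precedes ys a b" if "ys \<in> set xss" for ys
      using Cons.prems(1) that by simp
    show "i \<le> j" if "i < length xss" "j < length xss" "a \<in> set (xss ! i)" "b \<in> set (xss ! j)"
      for i j
      using Cons.prems(2)[of "Suc i" "Suc j"] that by simp
  qed
  moreover have "a \<notin> set (concat xss)" if "b \<in> set xs"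
  proof
    assume "a \<in> set (concat xss)"
    then obtain ys where "ys \<in> set xss" "a \<in> set ys" by auto
    then obtain j where "j < length xss" "a \<in> set (xss ! j)"
      by (auto simp: in_set_conv_nth)
    with that Cons.prems(2)[of "Suc j" 0] show False by simp
  qed
  ultimately show ?case
    using Cons.prems(1) by (simp add: precedes_append)
qed

lemma quorum_contains_honest:
  assumes "finite byz" "3 * card byz < card nodes" "2 * card nodes < 3 * card votes"
  shows "\<exists>v. v \<in> votes - byz"
proof (rule ccontr)
  assume "\<nexists>v. v \<in> votes - byz"
  then have "votes \<subseteq> byz" by blast
  with assms(1) have "card votes \<le> card byz" by (rule card_mono)
  with assms(2,3) show False by linarith
qed

lemma otxs_of_cl_of: "x \<in> otxs_of cnt c \<Longrightarrow> cl_of x = c"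
  by (auto simp: otxs_of_def cl_of_def)

lemma finite_shardCLs: "finite R \<Longrightarrow> finite (shardCLs R P i)"
  by (rule finite_subset[of _ "snd ` R"])
    (auto simp: shardCLs_def intro: rev_image_eqI[of "(i, _)"])

lemma valid_cycle_selected_iff:
  "valid_cycle m ts cnt R P props \<Longrightarrow>
   (i, h) \<in> fst props \<longleftrightarrow>
     i \<in> {1..m} \<and> h \<in> shardCLs R P i \<and> ts i h \<le> (MIN i'\<in>{1..m}. shardLastTS ts R P i')"
  by (simp add: valid_cycle_def)

lemma valid_cycle_otx_iff:
  assumes "valid_cycle m ts cnt R P props" "x \<in> otxs_of cnt (cl_of x)"
  shows "x \<in> set (snd props) \<longleftrightarrow> cl_of x \<in> fst props"
proof -
  have "set (snd props) = (\<Union>c\<in>fst props. otxs_of cnt c)"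
    using assms(1) by (simp add: valid_cycle_def)
  with assms(2) show ?thesis
    using otxs_of_cl_of by blast
qed

lemma valid_cycle_not_reselected:
  assumes "valid_cycle m ts cnt R (ordered_before props k') (props k')"
    and "k < k'" "c \<in> fst (props k)"
  shows "c \<notin> fst (props k')"
proof
  assume "c \<in> fst (props k')"
  with assms(1) have "c \<notin> ordered_before props k'"
    by (cases c) (simp add: valid_cycle_selected_iff shardCLs_def)
  with assms(2,3) show False
    by (auto simp: ordered_before_def)
qed

lemma valid_cycle_selects_earlier:
  assumes valid: "valid_cycle m ts cnt R P props" and "finite R"
    and shard: "fst c \<in> {1..m}" and mono: "strict_mono (ts (fst c))"
    and selected: "c' \<in> fst props" and earlier: "blockTS ts c \<le> blockTS ts c'"
  shows "c \<in> P \<or> c \<in> fst props"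
proof -
  obtain i h where c: "c = (i, h)" by fastforce
  obtain i' h' where c': "c' = (i', h')" by fastforce
  let ?cutoff = "MIN i'\<in>{1..m}. shardLastTS ts R P i'"
  define last where "last = Max (shardCLs R P i)"
  have i: "i \<in> {1..m}"
    using shard c by simp
  have "shardCLs R P i \<noteq> {}"
    using valid i by (simp add: valid_cycle_def)
  with \<open>finite R\<close> have last_in: "last \<in> shardCLs R P i"
    unfolding last_def by (intro Max_in finite_shardCLs)
  have "ts i' h' \<le> ?cutoff"
    using valid selected c' by (simp add: valid_cycle_selected_iff)
  moreover have "?cutoff \<le> ts i last"
    using i by (simp add: shardLastTS_def last_def)
  ultimately have below_cutoff: "ts i h \<le> ?cutoff" and "ts i h \<le> ts i last"
    using earlier c c' by (simp_all add: blockTS_def)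
  then have "h \<le> last"
    using mono c by (simp add: strict_mono_less_eq)
  with last_in have "(i, h) \<in> P \<or> h \<in> shardCLs R P i"
    by (auto simp: shardCLs_def)
  with below_cutoff i valid c show ?thesis
    by (auto simp: valid_cycle_selected_iff)
qed

definition valid_run ::
  "nat \<Rightarrow> (nat \<Rightarrow> nat \<Rightarrow> real) \<Rightarrow> (nat \<Rightarrow> nat \<Rightarrow> nat) \<Rightarrow> (nat \<Rightarrow> cl set)
     \<Rightarrow> (nat \<Rightarrow> cl set \<times> otx list) \<Rightarrow> nat \<Rightarrow> bool" where
  "valid_run m ts cnt recv props K \<longleftrightarrow>
     (\<forall>k<K. valid_cycle m ts cnt (recv k) (ordered_before props k) (props k))"

lemma valid_run_otx_iff:
  assumes "valid_run m ts cnt recv props K" "k < K" "x \<in> otxs_of cnt (cl_of x)"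
  shows "x \<in> set (snd (props k)) \<longleftrightarrow> cl_of x \<in> fst (props k)"
  using valid_cycle_otx_iff[of m ts cnt "recv k" "ordered_before props k" "props k" x] assms
  by (simp add: valid_run_def)

lemma valid_run_selected_once:
  assumes run: "valid_run m ts cnt recv props K"
    and "k < K" "k' < K" "c \<in> fst (props k)" "c \<in> fst (props k')"
  shows "k = k'"
proof -
  have "\<not> k < k'" "\<not> k' < k"
    using assms valid_cycle_not_reselected[of m ts cnt "recv k'" props k' k c]
      valid_cycle_not_reselected[of m ts cnt "recv k" props k k' c]
    by (auto simp: valid_run_def)
  then show ?thesis by simp
qed

lemma valid_run_otx_no_later:
  assumes run: "valid_run m ts cnt recv props K" and "finite (recv k)"
    and shard: "fst (cl_of x) \<in> {1..m}" "strict_mono (ts (fst (cl_of x)))"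
    and otxs: "x \<in> otxs_of cnt (cl_of x)" "y \<in> otxs_of cnt (cl_of y)"
    and earlier: "blockTS ts (cl_of x) \<le> blockTS ts (cl_of y)"
    and "k < K" "y \<in> set (snd (props k))"
  shows "\<exists>k'\<le>k. x \<in> set (snd (props k'))"
proof -
  have valid: "valid_cycle m ts cnt (recv k') (ordered_before props k') (props k')"
    if "k' \<le> k" for k'
    using run that \<open>k < K\<close> by (simp add: valid_run_def)
  have "cl_of y \<in> fst (props k)"
    using valid_cycle_otx_iff[OF valid otxs(2)] \<open>y \<in> set (snd (props k))\<close> by simp
  then have "cl_of x \<in> ordered_before props k \<or> cl_of x \<in> fst (props k)"
    by (rule valid_cycle_selects_earlier[OF valid[OF order_refl] \<open>finite (recv k)\<close> shard _
          earlier])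
  then obtain k' where "k' \<le> k" "cl_of x \<in> fst (props k')"
    unfolding ordered_before_def by (blast intro: less_imp_le order_refl)
  with valid_cycle_otx_iff[OF valid otxs(1)] show ?thesis by blast
qed

lemma valid_run_output_log_precedes:
  assumes run: "valid_run m ts cnt recv props K"
    and "\<not> order_ok ts y x" "x \<noteq> y" "x \<in> otxs_of cnt (cl_of x)"
    and no_later: "\<And>k. k < K \<Longrightarrow> y \<in> set (snd (props k)) \<Longrightarrow>
                     \<exists>k'\<le>k. x \<in> set (snd (props k'))"
  shows "precedes (output_log props K) x y"
  unfolding output_log_def
proof (rule precedes_concat)
  fix zs assume "zs \<in> set (map (\<lambda>k. snd (props k)) [0..<K])"
  then obtain k where "k < K" "zs = snd (props k)" by auto
  with run have "sorted_wrt (order_ok ts) zs"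
    by (simp add: valid_run_def valid_cycle_def)
  then show "precedes zs x y"
    using assms(2,3) by (rule sorted_wrt_precedes)
next
  fix i j assume "i < length (map (\<lambda>k. snd (props k)) [0..<K])"
    "j < length (map (\<lambda>k. snd (props k)) [0..<K])"
    "x \<in> set (map (\<lambda>k. snd (props k)) [0..<K] ! i)"
    "y \<in> set (map (\<lambda>k. snd (props k)) [0..<K] ! j)"
  then have ij: "i < K" "j < K" "x \<in> set (snd (props i))" "y \<in> set (snd (props j))"
    by simp_all
  then obtain k where k: "k \<le> j" "x \<in> set (snd (props k))"
    using no_later by blast
  have "cl_of x \<in> fst (props i)" "cl_of x \<in> fst (props k)"
    using ij k valid_run_otx_iff[OF run _ assms(4)] by auto
  with ij k have "i = k"
    by (intro valid_run_selected_once[OF run]) auto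
  with k show "i \<le> j" by simp
qed

lemma set_output_log: "set (output_log props K) = (\<Union>k<K. set (snd (props k)))"
  by (auto simp: output_log_def)

theorem lemma2:
  fixes m :: nat
    and ts :: "nat \<Rightarrow> nat \<Rightarrow> real"
    and cnt :: "nat \<Rightarrow> nat \<Rightarrow> nat"
    and nodes byz :: "'node set"
    and recv :: "nat \<Rightarrow> cl set"
    and props :: "nat \<Rightarrow> cl set \<times> otx list"
    and votes :: "nat \<Rightarrow> 'node set"
    and K :: nat
    and otx1 otx2 :: otx
  assumes m_pos: "m \<ge> 1"
    and ts_mono: "\<And>i. i \<in> {1..m} \<Longrightarrow> strict_mono (ts i)"
    and recv_fin: "\<And>k. finite (recv k)"
    and recv_genuine: "\<And>k. recv k \<subseteq> {1..m} \<times> UNIV"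
    and recv_mono: "\<And>k. recv k \<subseteq> recv (Suc k)"
    and nodes_fin: "finite nodes"
    and byz_sub: "byz \<subseteq> nodes"
    and byz_bound: "3 * card byz < card nodes"
    and votes_sub: "\<And>k. k < K \<Longrightarrow> votes k \<subseteq> nodes"
    and quorum: "\<And>k. k < K \<Longrightarrow> 3 * card (votes k) > 2 * card nodes"
    and honest_check: "\<And>k v. k < K \<Longrightarrow> v \<in> votes k - byz \<Longrightarrow>
            valid_cycle m ts cnt (recv k) (ordered_before props k) (props k)"
    and otx1_recv: "cl_of otx1 \<in> recv K" "otx1 \<in> otxs_of cnt (cl_of otx1)"
    and otx2_recv: "cl_of otx2 \<in> recv K" "otx2 \<in> otxs_of cnt (cl_of otx2)"
    and rule: "blockTS ts (cl_of otx1) < blockTS ts (cl_of otx2) \<or>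
               (cl_of otx1 = cl_of otx2 \<and> f_idx otx1 < f_idx otx2)"
  shows "otx2 \<in> set (output_log props K) \<longrightarrow>
           otx1 \<in> set (output_log props K) \<and>
           (\<forall>p q. p < length (output_log props K) \<and> q < length (output_log props K) \<and>
                  output_log props K ! p = otx1 \<and> output_log props K ! q = otx2 \<longrightarrow> p < q)"
proof -
  have run: "valid_run m ts cnt recv props K"
    unfolding valid_run_def
    using quorum_contains_honest[OF finite_subset[OF byz_sub nodes_fin] byz_bound quorum]
      honest_check by blast
  have shard1: "fst (cl_of otx1) \<in> {1..m}"
    using otx1_recv(1) recv_genuine[of K] by (auto simp: mem_Times_iff)
  have "blockTS ts (cl_of otx1) \<le> blockTS ts (cl_of otx2)"
    using rule by auto
  then have no_later: "\<exists>k'\<le>k. otx1 \<in> set (snd (props k'))"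
    if "k < K" "otx2 \<in> set (snd (props k))" for k
    using valid_run_otx_no_later[OF run recv_fin shard1 ts_mono[OF shard1]
        otx1_recv(2) otx2_recv(2)] that by blast
  have "\<not> order_ok ts otx2 otx1" "otx1 \<noteq> otx2"
    using rule by (auto simp: order_ok_def)
  then have "precedes (output_log props K) otx1 otx2"
    using otx1_recv(2) no_later by (rule valid_run_output_log_precedes[OF run])
  moreover have "otx1 \<in> set (output_log props K)" if "otx2 \<in> set (output_log props K)"
    using that no_later by (force simp: set_output_log)
  ultimately show ?thesis
    unfolding precedes_def by blast
qed

end
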